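(* Let $\Lambda:\mathbb{R}\to[0,1]$ be a decreasing function. The following are equivalent: (i) $\mathrm{ES}_\Lambda$ is convex on $L^\infty$, i.e. $\mathrm{ES}_\Lambda(\gamma X+(1-\gamma)Y)\le\gamma\mathrm{ES}_\Lambda(X)+(1-\gamma)\mathrm{ES}_\Lambda(Y)$ for all $X,Y\in L^\infty$, $\gamma\in[0,1]$; (ii) $\mathrm{ES}_\Lambda$ is concave in mixtures; (iii) $\Lambda$ is constant on $\mathbb{R}$.
   Context: $(\Omega,\mathcal F,\mathbb P)$ is an atomless probability space, $L^0$ all random variables, $L^\infty$ essentially bounded ones; "decreasing" is weak; $\wedge=\min$. For $\alpha\in[0,1]$, $X\in L^0$: $\mathrm{VaR}_\alpha(X)=\inf\{x\in\mathbb{R}:\mathbb P(X\le x)\ge\alpha\}$. For $X\in L^\infty$: $\mathrm{ES}_\alpha(X)=\frac{1}{1-\alpha}\int_\alpha^1\mathrm{VaR}_\beta(X)\,\mathrm d\beta$ for $\alpha<1$, $\mathrm{ES}_1(X)=\mathrm{VaR}_1(X)$. For decreasing $\Lambda$: $\mathrm{ES}_\Lambda(X)=\sup_{x\in\mathbb{R}}\left(\mathrm{ES}_{\Lambda(x)}(X)\wedge x\right)$, $X\in L^\infty$. A law-invariant $\rho$ is concave in mixtures if $F\mapsto\rho(X_F)$ is concave on the set of compactly supported distributions on $\mathbb{R}$, i.e. $\rho(X_{\gamma F+(1-\gamma)G})\ge\gamma\rho(X_F)+(1-\gamma)\rho(X_G)$, where $X_F$ denotes a random variable with distribution $F$. 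*)

theory Defs
  imports "HOL-Probability.Probability"
begin

definition atomless :: "'a measure \<Rightarrow> bool" where
  "atomless M \<longleftrightarrow> (\<forall>A\<in>sets M. measure M A > 0 \<longrightarrow>
     (\<exists>B\<in>sets M. B \<subseteq> A \<and> 0 < measure M B \<and> measure M B < measure M A))"

definition Linf :: "'a measure \<Rightarrow> ('a \<Rightarrow> real) set" where
  "Linf M = {X. X \<in> borel_measurable M \<and> (\<exists>C. AE \<omega> in M. \<bar>X \<omega>\<bar> \<le> C)}"

definition VaR :: "'a measure \<Rightarrow> real \<Rightarrow> ('a \<Rightarrow> real) \<Rightarrow> real" where
  "VaR M \<alpha> X = Inf {x. measure M {\<omega>\<in>space M. X \<omega> \<le> x} \<ge> \<alpha>}"

definition ES :: "'a measure \<Rightarrow> real \<Rightarrow> ('a \<Rightarrow> real) \<Rightarrow> real" where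
  "ES M \<alpha> X = (if \<alpha> < 1 then (1 / (1 - \<alpha>)) * integral {\<alpha>..1} (\<lambda>\<beta>. VaR M \<beta> X)
                 else VaR M 1 X)"

definition ES_Lambda :: "'a measure \<Rightarrow> (real \<Rightarrow> real) \<Rightarrow> ('a \<Rightarrow> real) \<Rightarrow> real" where
  "ES_Lambda M \<Lambda> X = (SUP x::real. min (ES M (\<Lambda> x) X) x)"

definition ES_Lambda_convex :: "'a measure \<Rightarrow> (real \<Rightarrow> real) \<Rightarrow> bool" where
  "ES_Lambda_convex M \<Lambda> \<longleftrightarrow> (\<forall>X\<in>Linf M. \<forall>Y\<in>Linf M. \<forall>\<gamma>::real. 0 \<le> \<gamma> \<and> \<gamma> \<le> 1 \<longrightarrow>
     ES_Lambda M \<Lambda> (\<lambda>\<omega>. \<gamma> * X \<omega> + (1 - \<gamma>) * Y \<omega>)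
       \<le> \<gamma> * ES_Lambda M \<Lambda> X + (1 - \<gamma>) * ES_Lambda M \<Lambda> Y)"

text \<open>Compactly supported distributions are exactly the laws of elements of Linf.\<close>
definition ES_Lambda_concave_mixtures :: "'a measure \<Rightarrow> (real \<Rightarrow> real) \<Rightarrow> bool" where
  "ES_Lambda_concave_mixtures M \<Lambda> \<longleftrightarrow> (\<forall>X\<in>Linf M. \<forall>Y\<in>Linf M. \<forall>Z\<in>Linf M. \<forall>\<gamma>::real.
     0 \<le> \<gamma> \<and> \<gamma> \<le> 1 \<and>
     (\<forall>x. measure M {\<omega>\<in>space M. Z \<omega> \<le> x}
            = \<gamma> * measure M {\<omega>\<in>space M. X \<omega> \<le> x} + (1 - \<gamma>) * measure M {\<omega>\<in>space M. Y \<omega> \<le> x})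
     \<longrightarrow> ES_Lambda M \<Lambda> Z \<ge> \<gamma> * ES_Lambda M \<Lambda> X + (1 - \<gamma>) * ES_Lambda M \<Lambda> Y)"

end

theory Submission
  imports Defs
begin

(*
  For a constant level c, ES_Lambda is ES_c. For c < 1, computing E (X - t)^+ both over the
  quantile function and by the layer-cake formula yields the Rockafellar--Uryasev representation
  (1 - c) ES_c X = min_t ((1 - c) t + E (X - t)^+). The objective is jointly convex in (X, t), so
  ES_c is convex; and since E (X - t)^+ = integral over s >= 0 of (1 - F_X (t + s)) is affine in the
  distribution function F_X, ES_c is a minimum of affine functions of F_X, hence concave in
  mixtures. ES_1 is the essential supremum, for which both properties are immediate.

  If Lambda is not constant, pick x1 < x2 with Lambda x2 < Lambda x1. At every x,
  min x (ES_{Lambda x} X) <= ES_Lambda X <= max x (ES_{Lambda x} X), the upper bound because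
  ES_alpha increases with alpha. For two-point variables v + w 1_A both bounds are explicit, as
  ES_alpha = v + w min 1 (P A / (1 - alpha)). Since an atomless space has events of (nearly) any
  prescribed probability, evaluating these bounds at x1 and x2 produces two-point variables that
  violate convexity, and others that violate concavity in mixtures.
*)

lemma nn_integral_layer_cake:
  fixes f :: "'b \<Rightarrow> real"
  assumes N: "sigma_finite_measure N" and f[measurable]: "f \<in> borel_measurable N"
    and nonneg: "\<And>x. x \<in> space N \<Longrightarrow> 0 \<le> f x"
  shows "(\<integral>\<^sup>+x. ennreal (f x) \<partial>N)
       = (\<integral>\<^sup>+s. indicator {0..} s * emeasure N {x\<in>space N. s < f x} \<partial>lborel)"
proof -
  interpret N: sigma_finite_measure N by (rule N)
  interpret pair_sigma_finite N lborel
    by (intro pair_sigma_finite.intro N lborel.sigma_finite_measure_axioms)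
  have "(\<lambda>p. indicator {0..<f (fst p)} (snd p) :: ennreal)
      = (\<lambda>p. if 0 \<le> snd p \<and> snd p < f (fst p) then 1 else 0)"
    by (auto simp: fun_eq_iff indicator_def)
  moreover have "(\<lambda>p. if 0 \<le> snd p \<and> snd p < f (fst p) then 1 else 0 :: ennreal)
      \<in> borel_measurable (N \<Otimes>\<^sub>M lborel)"
    by measurable
  ultimately have meas:
      "case_prod (\<lambda>x s. indicator {0..<f x} s :: ennreal) \<in> borel_measurable (N \<Otimes>\<^sub>M lborel)"
    by (simp add: case_prod_beta')
  have slice: "(\<integral>\<^sup>+x. indicator {0..<f x} s \<partial>N)
      = indicator {0..} s * emeasure N {x\<in>space N. s < f x}"
    for s :: real
  proof (cases "0 \<le> s")
    case True
    have "(\<integral>\<^sup>+x. indicator {0..<f x} s \<partial>N) = (\<integral>\<^sup>+x. indicator {x\<in>space N. s < f x} x \<partial>N)"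
      by (intro nn_integral_cong) (use True in \<open>auto simp: indicator_def\<close>)
    then show ?thesis using True by simp
  qed (simp add: indicator_def)
  have "(\<integral>\<^sup>+x. ennreal (f x) \<partial>N) = (\<integral>\<^sup>+x. (\<integral>\<^sup>+s. indicator {0..<f x} s \<partial>lborel) \<partial>N)"
    by (intro nn_integral_cong) (simp add: nonneg)
  also have "\<dots> = (\<integral>\<^sup>+s. (\<integral>\<^sup>+x. indicator {0..<f x} s \<partial>N) \<partial>lborel)"
    using Fubini'[OF meas] by simp
  finally show ?thesis by (simp only: slice)
qed

lemma ES_Lambda_const_level: "ES_Lambda M (\<lambda>_. c) X = ES M c X"
  unfolding ES_Lambda_def by (rule cSup_eq_maximum) (auto intro!: image_eqI[where x="ES M c X"])

lemma ES_Lambda_convexD: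
  assumes "ES_Lambda_convex M \<Lambda>" "X \<in> Linf M" "Y \<in> Linf M" "0 \<le> \<gamma>" "\<gamma> \<le> 1"
  shows "ES_Lambda M \<Lambda> (\<lambda>\<omega>. \<gamma> * X \<omega> + (1 - \<gamma>) * Y \<omega>)
       \<le> \<gamma> * ES_Lambda M \<Lambda> X + (1 - \<gamma>) * ES_Lambda M \<Lambda> Y"
  using assms unfolding ES_Lambda_convex_def by blast

lemma ES_Lambda_concave_mixturesD:
  assumes "ES_Lambda_concave_mixtures M \<Lambda>" "X \<in> Linf M" "Y \<in> Linf M" "Z \<in> Linf M"
    "0 \<le> \<gamma>" "\<gamma> \<le> 1"
    "\<And>x. measure M {\<omega>\<in>space M. Z \<omega> \<le> x}
       = \<gamma> * measure M {\<omega>\<in>space M. X \<omega> \<le> x} + (1 - \<gamma>) * measure M {\<omega>\<in>space M. Y \<omega> \<le> x}"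
  shows "\<gamma> * ES_Lambda M \<Lambda> X + (1 - \<gamma>) * ES_Lambda M \<Lambda> Y \<le> ES_Lambda M \<Lambda> Z"
  using assms unfolding ES_Lambda_concave_mixtures_def by blast

lemma pos_part_convex:
  fixes g a b :: real
  assumes "0 \<le> g" "g \<le> 1"
  shows "max 0 (g * a + (1 - g) * b) \<le> g * max 0 a + (1 - g) * max 0 b"
proof -
  have "g * a \<le> g * max 0 a" "(1 - g) * b \<le> (1 - g) * max 0 b"
    using assms by (intro mult_left_mono; simp)+
  then show ?thesis using assms by simp
qed

lemma ennreal_convex_comb:
  fixes g a b :: real
  assumes "0 \<le> g" "g \<le> 1" "0 \<le> a" "0 \<le> b"
  shows "ennreal (g * a + (1 - g) * b) = ennreal g * ennreal a + ennreal (1 - g) * ennreal b"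
  using assms by (simp add: ennreal_mult)

lemma decreasing_nonconstant_obtains:
  fixes \<Lambda> :: "real \<Rightarrow> real"
  assumes "\<And>x y. x \<le> y \<Longrightarrow> \<Lambda> y \<le> \<Lambda> x" and "\<not> (\<exists>c. \<forall>x. \<Lambda> x = c)"
  obtains x1 x2 where "x1 < x2" "\<Lambda> x2 < \<Lambda> x1"
proof -
  obtain a where a: "\<Lambda> a \<noteq> \<Lambda> 0" using assms(2) by blast
  show ?thesis
  proof (cases "a < 0")
    case True
    then show ?thesis using that[of a 0] assms(1)[of a 0] a by linarith
  next
    case False
    then show ?thesis using that[of 0 a] assms(1)[of 0 a] a by (cases "a = 0") auto
  qed
qed

lemma ES_Lambda_le_max:
  assumes mono: "\<And>\<alpha> \<alpha>'. 0 \<le> \<alpha> \<Longrightarrow> \<alpha> \<le> \<alpha>' \<Longrightarrow> \<alpha>' \<le> 1 \<Longrightarrow> ES M \<alpha> X \<le> ES M \<alpha>' X"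
    and L: "\<And>x. 0 \<le> \<Lambda> x \<and> \<Lambda> x \<le> 1" and anti: "\<And>x y. x \<le> y \<Longrightarrow> \<Lambda> y \<le> \<Lambda> x"
  shows "ES_Lambda M \<Lambda> X \<le> max x0 (ES M (\<Lambda> x0) X)"
  unfolding ES_Lambda_def
proof (rule cSUP_least)
  show "min (ES M (\<Lambda> x) X) x \<le> max x0 (ES M (\<Lambda> x0) X)" for x
  proof (cases "x \<le> x0")
    case False
    then have "ES M (\<Lambda> x) X \<le> ES M (\<Lambda> x0) X" using mono L anti[of x0 x] by auto
    then show ?thesis by simp
  qed simp
qed simp

lemma min_le_ES_Lambda:
  assumes bounded: "\<And>\<alpha>. 0 \<le> \<alpha> \<Longrightarrow> \<alpha> \<le> 1 \<Longrightarrow> ES M \<alpha> X \<le> B"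
    and L: "\<And>x. 0 \<le> \<Lambda> x \<and> \<Lambda> x \<le> 1"
  shows "min x0 (ES M (\<Lambda> x0) X) \<le> ES_Lambda M \<Lambda> X"
proof -
  have "bdd_above (range (\<lambda>x. min (ES M (\<Lambda> x) X) x))"
    using bounded L by (intro bdd_aboveI2[where M=B]) (simp add: min.coboundedI1)
  then show ?thesis
    unfolding ES_Lambda_def by (subst min.commute) (rule cSUP_upper, simp_all)
qed

section \<open>Distribution functions and Value-at-Risk\<close>

definition rv_cdf :: "'a measure \<Rightarrow> ('a \<Rightarrow> real) \<Rightarrow> real \<Rightarrow> real" where
  "rv_cdf M X x = measure M {\<omega>\<in>space M. X \<omega> \<le> x}"

lemma VaR_eq_Inf_rv_cdf: "VaR M \<beta> X = Inf {x. \<beta> \<le> rv_cdf M X x}"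
  by (simp add: VaR_def rv_cdf_def)

lemma bounded_borel_integrable_on_Icc:
  fixes g :: "real \<Rightarrow> real"
  assumes [measurable]: "g \<in> borel_measurable borel" and B: "\<And>x. \<bar>g x\<bar> \<le> B"
  shows "g integrable_on {a..b}"
proof -
  have "set_integrable lborel {a..b} g"
    unfolding set_integrable_def
    by (rule integrableI_bounded_set_indicator[where B=B]) (auto simp: B emeasure_lborel_Icc_eq)
  then show ?thesis by (rule set_borel_integral_eq_integral(1))
qed

lemma LinfE:
  assumes "X \<in> Linf M"
  obtains C where "X \<in> borel_measurable M" "AE \<omega> in M. \<bar>X \<omega>\<bar> \<le> C"
  using assms unfolding Linf_def by auto

lemma Linf_const: "(\<lambda>_. m) \<in> Linf M"
  unfolding Linf_def by (auto intro!: exI[of _ "\<bar>m\<bar>"])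

lemma Linf_two_point: "A \<in> sets M \<Longrightarrow> (\<lambda>\<omega>. v + w * indicator A \<omega>) \<in> Linf M"
  unfolding Linf_def by (auto intro!: exI[of _ "\<bar>v\<bar> + \<bar>w\<bar>"] simp: indicator_def)

lemma Linf_convex_comb:
  assumes X: "X \<in> Linf M" and Y: "Y \<in> Linf M" and g: "0 \<le> g" "g \<le> 1"
  shows "(\<lambda>\<omega>. g * X \<omega> + (1 - g) * Y \<omega>) \<in> Linf M"
proof -
  obtain C1 C2 where "X \<in> borel_measurable M" "AE \<omega> in M. \<bar>X \<omega>\<bar> \<le> C1"
    and "Y \<in> borel_measurable M" "AE \<omega> in M. \<bar>Y \<omega>\<bar> \<le> C2"
    using X Y by (metis LinfE)
  moreover have "\<bar>g * x + (1 - g) * y\<bar> \<le> g * C1 + (1 - g) * C2"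
    if "\<bar>x\<bar> \<le> C1" "\<bar>y\<bar> \<le> C2" for x y
  proof -
    have "\<bar>g * x + (1 - g) * y\<bar> \<le> g * \<bar>x\<bar> + (1 - g) * \<bar>y\<bar>"
      using g abs_triangle_ineq[of "g * x" "(1 - g) * y"] by (simp add: abs_mult)
    also have "\<dots> \<le> g * C1 + (1 - g) * C2"
      using that g by (intro add_mono mult_left_mono) auto
    finally show ?thesis .
  qed
  ultimately show ?thesis
    unfolding Linf_def by (auto intro!: exI[of _ "g * C1 + (1 - g) * C2"])
qed

context prob_space
begin

lemma rv_cdf_mono: "X \<in> borel_measurable M \<Longrightarrow> x \<le> y \<Longrightarrow> rv_cdf M X x \<le> rv_cdf M X y"
  unfolding rv_cdf_def by (intro finite_measure_mono) auto

lemma rv_cdf_le_1: "rv_cdf M X x \<le> 1"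
  unfolding rv_cdf_def by simp

lemma rv_cdf_nonneg: "0 \<le> rv_cdf M X x"
  unfolding rv_cdf_def by simp

lemma rv_cdf_eq_1_iff:
  "X \<in> borel_measurable M \<Longrightarrow> rv_cdf M X x = 1 \<longleftrightarrow> (AE \<omega> in M. X \<omega> \<le> x)"
  unfolding rv_cdf_def by (subst prob_eq_1) (auto elim: eventually_mono)

lemma rv_cdf_eq_0:
  assumes "X \<in> borel_measurable M" "AE \<omega> in M. \<bar>X \<omega>\<bar> \<le> C" "x < - C"
  shows "rv_cdf M X x = 0"
  unfolding rv_cdf_def using assms by (subst prob_eq_0) (auto elim!: eventually_mono)

lemma rv_cdf_right_continuous:
  assumes "X \<in> borel_measurable M"
  shows "continuous (at_right a) (rv_cdf M X)"
proof -
  interpret D: finite_borel_measure "distr M borel X"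
    by (rule finite_borel_measure.intro[OF finite_measure_distr[OF assms]]) (unfold_locales, simp)
  have "cdf (distr M borel X) = rv_cdf M X"
    using assms
    by (auto simp: fun_eq_iff cdf_def rv_cdf_def measure_distr vimage_def Int_def conj_commute)
  then show ?thesis using D.cdf_is_right_cont by metis
qed

lemma rv_cdf_borel: "X \<in> borel_measurable M \<Longrightarrow> rv_cdf M X \<in> borel_measurable borel"
  by (rule borel_measurable_mono) (auto simp: mono_def intro: rv_cdf_mono)

lemma VaR_le_iff:
  assumes X: "X \<in> Linf M" and \<beta>: "0 < \<beta>" "\<beta> \<le> 1"
  shows "VaR M \<beta> X \<le> x \<longleftrightarrow> \<beta> \<le> rv_cdf M X x"
proof -
  obtain C where X[measurable]: "X \<in> borel_measurable M" and C: "AE \<omega> in M. \<bar>X \<omega>\<bar> \<le> C"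
    using X by (rule LinfE)
  define S where "S = {x. \<beta> \<le> rv_cdf M X x}"
  have "rv_cdf M X C = 1" using C by (subst rv_cdf_eq_1_iff) (auto elim: eventually_mono)
  then have "C \<in> S" using \<beta> by (simp add: S_def)
  then have ne: "S \<noteq> {}" by auto
  have "- C \<le> y" if "y \<in> S" for y
    using that \<beta> rv_cdf_eq_0[OF X C, of y] by (force simp: S_def)
  then have bdd: "bdd_below S" by (auto simp: bdd_below_def)
  have "\<beta> \<le> rv_cdf M X (Inf S)"
  proof (rule tendsto_lowerbound)
    show "(rv_cdf M X \<longlongrightarrow> rv_cdf M X (Inf S)) (at_right (Inf S))"
      using rv_cdf_right_continuous[OF X] by (simp add: continuous_within)
    show "\<forall>\<^sub>F y in at_right (Inf S). \<beta> \<le> rv_cdf M X y"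
      using eventually_at_right_less
    proof eventually_elim
      case (elim y)
      then obtain z where "z \<in> S" "z < y" using cInf_lessD[OF ne] by blast
      then show ?case using rv_cdf_mono[OF X, of z y] by (simp add: S_def)
    qed
  qed simp
  then show ?thesis
    using rv_cdf_mono[OF X, of "Inf S" x] cInf_lower[OF _ bdd, of x]
    unfolding VaR_eq_Inf_rv_cdf S_def[symmetric] by (auto simp: S_def)
qed

lemma rv_cdf_VaR: "X \<in> Linf M \<Longrightarrow> 0 < \<beta> \<Longrightarrow> \<beta> \<le> 1 \<Longrightarrow> \<beta> \<le> rv_cdf M X (VaR M \<beta> X)"
  using VaR_le_iff by blast

lemma VaR_1_le_iff: "X \<in> Linf M \<Longrightarrow> VaR M 1 X \<le> x \<longleftrightarrow> (AE \<omega> in M. X \<omega> \<le> x)"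
  using rv_cdf_le_1[of X x] by (auto simp: VaR_le_iff Linf_def simp flip: rv_cdf_eq_1_iff)

lemma abs_VaR_le:
  assumes X: "X \<in> borel_measurable M" and C: "AE \<omega> in M. \<bar>X \<omega>\<bar> \<le> C"
    and \<beta>: "0 < \<beta>" "\<beta> \<le> 1"
  shows "\<bar>VaR M \<beta> X\<bar> \<le> C"
proof -
  have XL: "X \<in> Linf M" using X C by (auto simp: Linf_def)
  have "rv_cdf M X C = 1" using C by (subst rv_cdf_eq_1_iff[OF X]) (auto elim: eventually_mono)
  then have "VaR M \<beta> X \<le> C" using \<beta> by (simp add: VaR_le_iff[OF XL \<beta>])
  moreover have "- C \<le> VaR M \<beta> X"
    using rv_cdf_VaR[OF XL \<beta>] \<beta> rv_cdf_eq_0[OF X C, of "VaR M \<beta> X"] by force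
  ultimately show ?thesis by simp
qed

lemma VaR_mono:
  assumes X: "X \<in> Linf M" and "0 < \<beta>" "\<beta> \<le> \<beta>'" "\<beta>' \<le> 1"
  shows "VaR M \<beta> X \<le> VaR M \<beta>' X"
  using assms rv_cdf_VaR[OF X, of \<beta>'] by (simp add: VaR_le_iff)

end

section \<open>Quantile function and the Rockafellar--Uryasev formula\<close>

(* VaR at level 0 is the infimum of all reals, a junk value; cutting off to 0 outside (0, 1]
   keeps the quantile function bounded. *)
definition quantile :: "'a measure \<Rightarrow> ('a \<Rightarrow> real) \<Rightarrow> real \<Rightarrow> real" where
  "quantile M X \<beta> = (if 0 < \<beta> \<and> \<beta> \<le> 1 then VaR M \<beta> X else 0)"

lemma ES_eq_integral_quantile:
  assumes "0 \<le> c" "c < 1"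
  shows "(1 - c) * ES M c X = integral {c..1} (quantile M X)"
proof -
  have "integral {c..1} (\<lambda>\<beta>. VaR M \<beta> X) = integral {c..1} (quantile M X)"
    by (rule integral_spike[OF negligible_sing[of 0]]) (use assms in \<open>auto simp: quantile_def\<close>)
  then show ?thesis using assms by (simp add: ES_def)
qed

context prob_space
begin

lemma quantile_borel: "X \<in> Linf M \<Longrightarrow> quantile M X \<in> borel_measurable borel"
  by (rule borel_measurable_piecewise_mono[of "{{..0}, {0<..1}, {1<..}}"])
     (auto simp: mono_on_def quantile_def intro: VaR_mono)

lemma abs_quantile_le:
  "X \<in> borel_measurable M \<Longrightarrow> AE \<omega> in M. \<bar>X \<omega>\<bar> \<le> C \<Longrightarrow> \<bar>quantile M X \<beta>\<bar> \<le> \<bar>C\<bar>"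
  using abs_VaR_le[of X C \<beta>] by (auto simp: quantile_def)

lemma integrable_on_quantile:
  assumes X: "X \<in> Linf M" and f: "continuous_on UNIV f"
  shows "(\<lambda>\<beta>. f (quantile M X \<beta>) :: real) integrable_on {a..b}"
proof -
  obtain C where "X \<in> borel_measurable M" "AE \<omega> in M. \<bar>X \<omega>\<bar> \<le> C"
    using X by (rule LinfE)
  then have q: "quantile M X \<beta> \<in> cball 0 \<bar>C\<bar>" for \<beta>
    using abs_quantile_le by simp
  have "bounded (f ` cball 0 \<bar>C\<bar>)"
    by (intro compact_imp_bounded compact_continuous_image continuous_on_subset[OF f]) auto
  then obtain B where "\<forall>y\<in>f ` cball 0 \<bar>C\<bar>. \<bar>y\<bar> \<le> B"
    unfolding bounded_real by blast
  then have "\<bar>f (quantile M X \<beta>)\<bar> \<le> B" for \<beta>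
    using q by blast
  moreover have "(\<lambda>\<beta>. f (quantile M X \<beta>)) \<in> borel_measurable borel"
    using quantile_borel[OF X] borel_measurable_continuous_onI[OF f] by measurable
  ultimately show ?thesis by (intro bounded_borel_integrable_on_Icc)
qed

lemma integrable_pos_part:
  assumes "X \<in> Linf M"
  shows "integrable M (\<lambda>\<omega>. max 0 (X \<omega> - t))"
proof -
  obtain C where "X \<in> borel_measurable M" "AE \<omega> in M. \<bar>X \<omega>\<bar> \<le> C"
    using assms by (rule LinfE)
  then show ?thesis
    by (intro integrable_const_bound[where B="\<bar>C\<bar> + \<bar>t\<bar>"]) (auto elim!: eventually_mono)
qed

lemma nn_integral_pos_part_eq_tail:
  assumes [measurable]: "X \<in> borel_measurable M"
  shows "(\<integral>\<^sup>+\<omega>. ennreal (max 0 (X \<omega> - t)) \<partial>M)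
       = (\<integral>\<^sup>+s. indicator {0..} s * ennreal (1 - rv_cdf M X (t + s)) \<partial>lborel)"
proof -
  have slice: "indicator {0..} s * emeasure M {\<omega>\<in>space M. s < max 0 (X \<omega> - t)}
      = indicator {0..} s * ennreal (1 - rv_cdf M X (t + s))" for s :: real
  proof (cases "0 \<le> s")
    case True
    then have "{\<omega>\<in>space M. s < max 0 (X \<omega> - t)} = space M - {\<omega>\<in>space M. X \<omega> \<le> t + s}"
      by auto
    then show ?thesis by (simp add: rv_cdf_def emeasure_eq_measure prob_compl)
  qed simp
  have "(\<integral>\<^sup>+\<omega>. ennreal (max 0 (X \<omega> - t)) \<partial>M)
      = (\<integral>\<^sup>+s. indicator {0..} s * emeasure M {\<omega>\<in>space M. s < max 0 (X \<omega> - t)} \<partial>lborel)"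
    by (rule nn_integral_layer_cake) (auto intro: sigma_finite_measure_axioms)
  then show ?thesis by (simp only: slice)
qed

lemma nn_integral_quantile_pos_part_eq_tail:
  assumes X: "X \<in> Linf M"
  shows "(\<integral>\<^sup>+\<beta>. ennreal (indicator {0<..1} \<beta> * max 0 (quantile M X \<beta> - t)) \<partial>lborel)
       = (\<integral>\<^sup>+s. indicator {0..} s * ennreal (1 - rv_cdf M X (t + s)) \<partial>lborel)"
proof -
  have [measurable]: "quantile M X \<in> borel_measurable borel" using X by (rule quantile_borel)
  have slice: "indicator {0..} s * emeasure lborel
        {\<beta>\<in>space lborel. s < indicator {0<..1} \<beta> * max 0 (quantile M X \<beta> - t)}
      = indicator {0..} s * ennreal (1 - rv_cdf M X (t + s))" for s :: real
  proof (cases "0 \<le> s")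
    case True
    have "s < indicator {0<..1} \<beta> * max 0 (quantile M X \<beta> - t)
        \<longleftrightarrow> 0 < \<beta> \<and> \<beta> \<le> 1 \<and> \<not> VaR M \<beta> X \<le> t + s" for \<beta>
      using True by (auto simp: indicator_def quantile_def)
    moreover have "0 < \<beta> \<and> \<beta> \<le> 1 \<and> \<not> VaR M \<beta> X \<le> t + s
        \<longleftrightarrow> rv_cdf M X (t + s) < \<beta> \<and> \<beta> \<le> 1" for \<beta>
    proof (cases "0 < \<beta> \<and> \<beta> \<le> 1")
      case True
      then have "VaR M \<beta> X \<le> t + s \<longleftrightarrow> \<beta> \<le> rv_cdf M X (t + s)"
        by (simp add: VaR_le_iff[OF X])
      then show ?thesis using True by linarith
    qed (use rv_cdf_nonneg[of X "t + s"] in linarith)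
    ultimately have "{\<beta>\<in>space lborel. s < indicator {0<..1} \<beta> * max 0 (quantile M X \<beta> - t)}
        = {rv_cdf M X (t + s)<..1}"
      by (simp add: set_eq_iff)
    then show ?thesis using True rv_cdf_le_1[of X "t + s"] by simp
  qed simp
  have "(\<integral>\<^sup>+\<beta>. ennreal (indicator {0<..1} \<beta> * max 0 (quantile M X \<beta> - t)) \<partial>lborel)
      = (\<integral>\<^sup>+s. indicator {0..} s * emeasure lborel
           {\<beta>\<in>space lborel. s < indicator {0<..1} \<beta> * max 0 (quantile M X \<beta> - t)} \<partial>lborel)"
    by (rule nn_integral_layer_cake) (auto intro: lborel.sigma_finite_measure_axioms)
  then show ?thesis by (simp only: slice)
qed

lemma integral_quantile_pos_part:
  assumes X: "X \<in> Linf M"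
  shows "integral {0..1} (\<lambda>\<beta>. max 0 (quantile M X \<beta> - t)) = (\<integral>\<omega>. max 0 (X \<omega> - t) \<partial>M)"
proof -
  let ?f = "\<lambda>\<beta>. max 0 (quantile M X \<beta> - t)"
  have "?f integrable_on {0..1}"
    using X by (rule integrable_on_quantile) (intro continuous_intros)
  then have "(?f has_integral integral {0..1} ?f) {0<..1}"
    by (subst has_integral_spike_set_eq[of "{0<..1}" "{0..1}"])
       (auto intro: negligible_subset[OF negligible_sing[of 0]])
  then have "(\<integral>\<^sup>+\<beta>. ennreal (indicator {0<..1} \<beta> * ?f \<beta>) \<partial>lborel) = ennreal (integral {0..1} ?f)"
    by (intro nn_integral_has_integral_lebesgue) auto
  moreover have "(\<integral>\<^sup>+\<omega>. ennreal (max 0 (X \<omega> - t)) \<partial>M) = ennreal (\<integral>\<omega>. max 0 (X \<omega> - t) \<partial>M)"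
    using integrable_pos_part[OF X] by (intro nn_integral_eq_integral) auto
  ultimately have "ennreal (integral {0..1} ?f) = ennreal (\<integral>\<omega>. max 0 (X \<omega> - t) \<partial>M)"
    using nn_integral_quantile_pos_part_eq_tail[OF X] nn_integral_pos_part_eq_tail[of X] X
    by (auto simp: Linf_def)
  moreover have "0 \<le> integral {0..1} ?f"
    using \<open>?f integrable_on {0..1}\<close> by (rule integral_nonneg) simp
  ultimately show ?thesis by (simp add: integral_nonneg_AE)
qed

lemma ES_le_Rockafellar_Uryasev:
  assumes X: "X \<in> Linf M" and c: "0 \<le> c" "c < 1"
  shows "(1 - c) * ES M c X \<le> (1 - c) * t + (\<integral>\<omega>. max 0 (X \<omega> - t) \<partial>M)"
proof -
  let ?e = "\<lambda>\<beta>. max 0 (quantile M X \<beta> - t)"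
  have q: "quantile M X integrable_on {c..1}"
    using integrable_on_quantile[OF X continuous_on_id] by simp
  have e: "?e integrable_on {a..b}" for a b
    using X by (rule integrable_on_quantile) (intro continuous_intros)
  have "integral {c..1} (quantile M X) \<le> integral {c..1} (\<lambda>\<beta>. t + ?e \<beta>)"
    by (rule integral_le) (auto intro!: q integrable_add e)
  also have "\<dots> = (1 - c) * t + integral {c..1} ?e"
    using c by (subst integral_add) (auto intro: e)
  also have "integral {c..1} ?e \<le> integral {0..1} ?e"
    using c by (intro integral_subset_le e) auto
  finally show ?thesis
    using c by (simp add: ES_eq_integral_quantile integral_quantile_pos_part[OF X])
qed

lemma integral_quantile_at_separating_level:
  assumes X: "X \<in> Linf M" and c: "0 \<le> c" "c \<le> 1"
    and above: "\<And>\<beta>. c < \<beta> \<Longrightarrow> \<beta> \<le> 1 \<Longrightarrow> t \<le> quantile M X \<beta>"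
    and below: "\<And>\<beta>. 0 < \<beta> \<Longrightarrow> \<beta> \<le> c \<Longrightarrow> quantile M X \<beta> \<le> t"
  shows "integral {c..1} (quantile M X)
       = (1 - c) * t + integral {0..1} (\<lambda>\<beta>. max 0 (quantile M X \<beta> - t))"
proof -
  let ?e = "\<lambda>\<beta>. max 0 (quantile M X \<beta> - t)"
  have e: "?e integrable_on {a..b}" for a b
    using X by (rule integrable_on_quantile) (intro continuous_intros)
  have "integral {c..1} (quantile M X) = integral {c..1} (\<lambda>\<beta>. t + ?e \<beta>)"
  proof (rule integral_spike[OF negligible_sing[of c]])
    fix \<beta> assume "\<beta> \<in> {c..1} - {c}"
    then show "t + ?e \<beta> = quantile M X \<beta>" using above[of \<beta>] by simp
  qed
  also have "\<dots> = (1 - c) * t + integral {c..1} ?e"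
    using c by (subst integral_add) (auto intro: e)
  also have "integral {c..1} ?e = integral {0..c} ?e + integral {c..1} ?e"
  proof -
    have "integral {0..c} ?e = integral {0..c} (\<lambda>_. 0)"
    proof (rule integral_spike[OF negligible_sing[of 0]])
      fix \<beta> assume "\<beta> \<in> {0..c} - {0}"
      then show "0 = ?e \<beta>" using below[of \<beta>] by simp
    qed
    then show ?thesis by simp
  qed
  also have "\<dots> = integral {0..1} ?e"
    using c by (intro Henstock_Kurzweil_Integration.integral_combine e) auto
  finally show ?thesis .
qed

lemma ES_Rockafellar_Uryasev_attained:
  assumes X: "X \<in> Linf M" and c: "0 \<le> c" "c < 1"
  obtains t where "(1 - c) * ES M c X = (1 - c) * t + (\<integral>\<omega>. max 0 (X \<omega> - t) \<partial>M)"
proof -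
  obtain C where "X \<in> borel_measurable M" "AE \<omega> in M. \<bar>X \<omega>\<bar> \<le> C"
    using X by (rule LinfE)
  then have bound: "\<bar>quantile M X \<beta>\<bar> \<le> \<bar>C\<bar>" for \<beta>
    by (rule abs_quantile_le)
  \<comment> \<open>VaR at level 0 is junk, so for c = 0 a lower bound of X serves as separating level\<close>
  define t where "t = (if c = 0 then - \<bar>C\<bar> else VaR M c X)"
  have "integral {c..1} (quantile M X)
      = (1 - c) * t + integral {0..1} (\<lambda>\<beta>. max 0 (quantile M X \<beta> - t))"
  proof (rule integral_quantile_at_separating_level[OF X])
    show "t \<le> quantile M X \<beta>" if "c < \<beta>" "\<beta> \<le> 1" for \<beta>
      using that c bound[of \<beta>] VaR_mono[OF X, of c \<beta>] by (auto simp: t_def quantile_def)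
    show "quantile M X \<beta> \<le> t" if "0 < \<beta>" "\<beta> \<le> c" for \<beta>
      using that c VaR_mono[OF X, of \<beta> c] by (auto simp: t_def quantile_def)
  qed (use c in auto)
  then show ?thesis
    using c that[of t] by (simp add: ES_eq_integral_quantile integral_quantile_pos_part[OF X])
qed

end

section \<open>Constant level\<close>

context prob_space
begin

lemma ES_convex_lt_1:
  assumes X: "X \<in> Linf M" and Y: "Y \<in> Linf M" and g: "0 \<le> g" "g \<le> 1"
    and c: "0 \<le> c" "c < 1"
  shows "ES M c (\<lambda>\<omega>. g * X \<omega> + (1 - g) * Y \<omega>) \<le> g * ES M c X + (1 - g) * ES M c Y"
proof -
  let ?Z = "\<lambda>\<omega>. g * X \<omega> + (1 - g) * Y \<omega>"
  let ?E = "\<lambda>W t. \<integral>\<omega>. max 0 (W \<omega> - t) \<partial>M"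
  obtain s where s: "(1 - c) * ES M c X = (1 - c) * s + ?E X s"
    using ES_Rockafellar_Uryasev_attained[OF X c] .
  obtain u where u: "(1 - c) * ES M c Y = (1 - c) * u + ?E Y u"
    using ES_Rockafellar_Uryasev_attained[OF Y c] .
  have "?E ?Z (g * s + (1 - g) * u)
      \<le> (\<integral>\<omega>. g * max 0 (X \<omega> - s) + (1 - g) * max 0 (Y \<omega> - u) \<partial>M)"
  proof (rule integral_mono)
    show "max 0 (?Z \<omega> - (g * s + (1 - g) * u)) \<le> g * max 0 (X \<omega> - s) + (1 - g) * max 0 (Y \<omega> - u)"
      for \<omega>
      using pos_part_convex[OF g, of "X \<omega> - s" "Y \<omega> - u"] by (simp add: algebra_simps)
  qed (use integrable_pos_part Linf_convex_comb[OF X Y g] X Y in auto)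
  also have "\<dots> = g * ?E X s + (1 - g) * ?E Y u"
    using integrable_pos_part[OF X] integrable_pos_part[OF Y] by simp
  finally have E: "?E ?Z (g * s + (1 - g) * u) \<le> g * ?E X s + (1 - g) * ?E Y u" .
  have "(1 - c) * ES M c ?Z \<le> (1 - c) * (g * s + (1 - g) * u) + ?E ?Z (g * s + (1 - g) * u)"
    by (rule ES_le_Rockafellar_Uryasev[OF Linf_convex_comb[OF X Y g] c])
  also have "\<dots> \<le> g * ((1 - c) * s + ?E X s) + (1 - g) * ((1 - c) * u + ?E Y u)"
    using E by (simp add: algebra_simps)
  also have "\<dots> = (1 - c) * (g * ES M c X + (1 - g) * ES M c Y)"
    by (simp only: s [symmetric] u [symmetric]) (simp add: algebra_simps)
  finally show ?thesis using c by (simp add: mult_le_cancel_left_pos)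
qed

lemma ES_1_convex:
  assumes X: "X \<in> Linf M" and Y: "Y \<in> Linf M" and g: "0 \<le> g" "g \<le> 1"
  shows "ES M 1 (\<lambda>\<omega>. g * X \<omega> + (1 - g) * Y \<omega>) \<le> g * ES M 1 X + (1 - g) * ES M 1 Y"
proof -
  have "AE \<omega> in M. X \<omega> \<le> VaR M 1 X" "AE \<omega> in M. Y \<omega> \<le> VaR M 1 Y"
    using VaR_1_le_iff[OF X] VaR_1_le_iff[OF Y] by blast+
  then have "AE \<omega> in M. g * X \<omega> + (1 - g) * Y \<omega> \<le> g * VaR M 1 X + (1 - g) * VaR M 1 Y"
  proof eventually_elim
    case (elim \<omega>)
    then show ?case using g by (intro add_mono mult_left_mono) auto
  qed
  then show ?thesis by (simp add: ES_def VaR_1_le_iff[OF Linf_convex_comb[OF X Y g]])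
qed

lemma ES_Lambda_convex_const:
  assumes c: "0 \<le> c" "c \<le> 1"
  shows "ES_Lambda_convex M (\<lambda>_. c)"
  unfolding ES_Lambda_convex_def ES_Lambda_const_level
proof (intro ballI allI impI)
  fix X Y and g :: real
  assume "X \<in> Linf M" "Y \<in> Linf M" "0 \<le> g \<and> g \<le> 1"
  then show "ES M c (\<lambda>\<omega>. g * X \<omega> + (1 - g) * Y \<omega>) \<le> g * ES M c X + (1 - g) * ES M c Y"
    using ES_convex_lt_1[of X Y g c] ES_1_convex[of X Y g] c by (cases "c < 1") auto
qed

lemma integral_pos_part_mixture:
  assumes X: "X \<in> Linf M" and Y: "Y \<in> Linf M" and Z: "Z \<in> Linf M"
    and g: "0 \<le> g" "g \<le> 1"
    and mix: "\<And>x. rv_cdf M Z x = g * rv_cdf M X x + (1 - g) * rv_cdf M Y x"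
  shows "(\<integral>\<omega>. max 0 (Z \<omega> - t) \<partial>M)
       = g * (\<integral>\<omega>. max 0 (X \<omega> - t) \<partial>M) + (1 - g) * (\<integral>\<omega>. max 0 (Y \<omega> - t) \<partial>M)"
proof -
  let ?E = "\<lambda>W. \<integral>\<omega>. max 0 (W \<omega> - t) \<partial>M"
  let ?T = "\<lambda>W s. indicator {0..} s * ennreal (1 - rv_cdf M W (t + s))"
  have tail: "ennreal (?E W) = (\<integral>\<^sup>+s. ?T W s \<partial>lborel)" if "W \<in> Linf M" for W
  proof -
    have "ennreal (?E W) = (\<integral>\<^sup>+\<omega>. ennreal (max 0 (W \<omega> - t)) \<partial>M)"
      using integrable_pos_part[OF that] by (intro nn_integral_eq_integral[symmetric]) auto
    also have "\<dots> = (\<integral>\<^sup>+s. ?T W s \<partial>lborel)"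
      by (rule nn_integral_pos_part_eq_tail) (use that in \<open>auto simp: Linf_def\<close>)
    finally show ?thesis .
  qed
  have [measurable]: "rv_cdf M X \<in> borel_measurable borel" "rv_cdf M Y \<in> borel_measurable borel"
    using X Y by (auto simp: Linf_def intro: rv_cdf_borel)
  have "?T Z s = ennreal g * ?T X s + ennreal (1 - g) * ?T Y s" for s
  proof -
    have "1 - rv_cdf M Z (t + s)
        = g * (1 - rv_cdf M X (t + s)) + (1 - g) * (1 - rv_cdf M Y (t + s))"
      by (simp add: mix algebra_simps)
    then show ?thesis
      using ennreal_convex_comb[OF g, of "1 - rv_cdf M X (t + s)" "1 - rv_cdf M Y (t + s)"]
      by (simp add: rv_cdf_le_1 indicator_def)
  qed
  then have "ennreal (?E Z)
      = ennreal g * (\<integral>\<^sup>+s. ?T X s \<partial>lborel) + ennreal (1 - g) * (\<integral>\<^sup>+s. ?T Y s \<partial>lborel)"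
    by (simp add: tail[OF Z] nn_integral_add nn_integral_cmult)
  also have "\<dots> = ennreal (g * ?E X + (1 - g) * ?E Y)"
    by (simp add: tail[OF X, symmetric] tail[OF Y, symmetric] ennreal_convex_comb[OF g]
        integral_nonneg_AE)
  finally show ?thesis
    using g by (subst (asm) ennreal_inj) (auto intro!: integral_nonneg_AE)
qed

lemma ES_mixture_concave_lt_1:
  assumes X: "X \<in> Linf M" and Y: "Y \<in> Linf M" and Z: "Z \<in> Linf M"
    and g: "0 \<le> g" "g \<le> 1" and c: "0 \<le> c" "c < 1"
    and mix: "\<And>x. rv_cdf M Z x = g * rv_cdf M X x + (1 - g) * rv_cdf M Y x"
  shows "g * ES M c X + (1 - g) * ES M c Y \<le> ES M c Z"
proof -
  obtain t where t: "(1 - c) * ES M c Z = (1 - c) * t + (\<integral>\<omega>. max 0 (Z \<omega> - t) \<partial>M)"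
    using ES_Rockafellar_Uryasev_attained[OF Z c] .
  have "(1 - c) * (g * ES M c X + (1 - g) * ES M c Y)
      = g * ((1 - c) * ES M c X) + (1 - g) * ((1 - c) * ES M c Y)"
    by (simp add: algebra_simps)
  also have "\<dots> \<le> g * ((1 - c) * t + (\<integral>\<omega>. max 0 (X \<omega> - t) \<partial>M))
      + (1 - g) * ((1 - c) * t + (\<integral>\<omega>. max 0 (Y \<omega> - t) \<partial>M))"
    using g ES_le_Rockafellar_Uryasev[OF X c, of t] ES_le_Rockafellar_Uryasev[OF Y c, of t]
    by (intro add_mono mult_left_mono) auto
  also have "\<dots> = (1 - c) * ES M c Z"
    unfolding t integral_pos_part_mixture[OF X Y Z g mix] by (simp add: algebra_simps)
  finally show ?thesis using c by (simp add: mult_le_cancel_left_pos)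
qed

lemma ES_1_mixture_concave:
  assumes X: "X \<in> Linf M" and Y: "Y \<in> Linf M" and Z: "Z \<in> Linf M"
    and g: "0 \<le> g" "g \<le> 1"
    and mix: "\<And>x. rv_cdf M Z x = g * rv_cdf M X x + (1 - g) * rv_cdf M Y x"
  shows "g * ES M 1 X + (1 - g) * ES M 1 Y \<le> ES M 1 Z"
proof -
  define z where "z = VaR M 1 Z"
  have "1 \<le> g * rv_cdf M X z + (1 - g) * rv_cdf M Y z"
    using rv_cdf_VaR[OF Z, of 1] by (simp add: z_def mix)
  moreover have "rv_cdf M X z \<le> 1" "rv_cdf M Y z \<le> 1"
    by (rule rv_cdf_le_1)+
  \<comment> \<open>a mixture of cdfs reaches 1 only if every component of positive weight does\<close>
  ultimately have "g \<le> g * rv_cdf M X z" "1 - g \<le> (1 - g) * rv_cdf M Y z"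
    using g mult_left_mono[of "rv_cdf M X z" 1 g] mult_left_mono[of "rv_cdf M Y z" 1 "1 - g"]
    by auto
  moreover have "w * VaR M 1 W \<le> w * z" if "W \<in> Linf M" "0 \<le> w" "w \<le> w * rv_cdf M W z" for W w
  proof (cases "w = 0")
    case False
    then have "1 \<le> rv_cdf M W z" using that(2,3) by (simp add: mult_le_cancel_left1)
    then show ?thesis using that(2) VaR_le_iff[OF that(1), of 1 z] by (simp add: mult_left_mono)
  qed simp
  ultimately have "g * VaR M 1 X \<le> g * z" "(1 - g) * VaR M 1 Y \<le> (1 - g) * z"
    using X Y g by auto
  then show ?thesis by (simp add: ES_def z_def algebra_simps)
qed

lemma ES_Lambda_concave_mixtures_const:
  assumes c: "0 \<le> c" "c \<le> 1"
  shows "ES_Lambda_concave_mixtures M (\<lambda>_. c)"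
  unfolding ES_Lambda_concave_mixtures_def ES_Lambda_const_level
proof (intro ballI allI impI)
  fix X Y Z and g :: real
  assume "X \<in> Linf M" "Y \<in> Linf M" "Z \<in> Linf M"
    and "0 \<le> g \<and> g \<le> 1 \<and> (\<forall>x. measure M {\<omega>\<in>space M. Z \<omega> \<le> x}
       = g * measure M {\<omega>\<in>space M. X \<omega> \<le> x} + (1 - g) * measure M {\<omega>\<in>space M. Y \<omega> \<le> x})"
  then show "g * ES M c X + (1 - g) * ES M c Y \<le> ES M c Z"
    using ES_mixture_concave_lt_1[of X Y Z g c] ES_1_mixture_concave[of X Y Z g] c
    by (cases "c < 1") (auto simp: rv_cdf_def)
qed

end

section \<open>Atomless probability spaces\<close>

context prob_space
begin

lemma atomless_small_event:
  assumes am: "atomless M" and E: "E \<in> sets M" "0 < prob E" and \<epsilon>: "0 < \<epsilon>"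
  obtains D where "D \<in> sets M" "D \<subseteq> E" "0 < prob D" "prob D < \<epsilon>"
proof -
  have halving: "\<exists>D\<in>sets M. D \<subseteq> E \<and> 0 < prob D \<and> prob D \<le> prob E / 2 ^ n" for n
  proof (induction n)
    case (Suc n)
    then obtain D where D: "D \<in> sets M" "D \<subseteq> E" "0 < prob D" "prob D \<le> prob E / 2 ^ n"
      by blast
    then obtain B where B: "B \<in> sets M" "B \<subseteq> D" "0 < prob B" "prob B < prob D"
      using am unfolding atomless_def by blast
    \<comment> \<open>either B or D - B carries at most half of D\<close>
    have diff: "prob (D - B) = prob D - prob B"
      using B D by (intro finite_measure_Diff) auto
    have half: "prob D / 2 \<le> prob E / 2 ^ Suc n" using D(4) by simp
    show ?case
    proof (cases "prob B \<le> prob D / 2")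
      case True
      then show ?thesis using B D half by (intro bexI[of _ B]) auto
    next
      case False
      have "D - B \<in> sets M" "D - B \<subseteq> E" using B D by auto
      moreover have "0 < prob (D - B)" "prob (D - B) \<le> prob E / 2 ^ Suc n"
        using B(4) False half diff by linarith+
      ultimately show ?thesis by blast
    qed
  qed (use E in auto)
  obtain n where "prob E / \<epsilon> < 2 ^ n"
    using real_arch_pow[of 2 "prob E / \<epsilon>"] by auto
  then have "prob E / 2 ^ n < \<epsilon>"
    using \<epsilon> by (simp add: divide_less_eq mult.commute)
  then show ?thesis using halving[of n] that by force
qed

lemma exists_near_maximal_disjoint_event:
  assumes S: "S \<in> sets M" "prob S < b"
  obtains D where "D \<in> sets M" "D \<inter> S = {}" "prob S + prob D < b"
    "\<And>D'. D' \<in> sets M \<Longrightarrow> D' \<inter> S = {} \<Longrightarrow> prob S + prob D' < b \<Longrightarrow> prob D' \<le> 2 * prob D"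
proof -
  define T where "T = {prob D | D. D \<in> sets M \<and> D \<inter> S = {} \<and> prob S + prob D < b}"
  have "0 \<in> T" using S by (auto simp: T_def intro!: exI[of _ "{}"])
  have bdd: "bdd_above T" by (auto simp: T_def intro!: bdd_aboveI[where M=1])
  have upper: "prob D' \<le> Sup T" if "D' \<in> sets M" "D' \<inter> S = {}" "prob S + prob D' < b" for D'
    using that by (intro cSup_upper[OF _ bdd]) (auto simp: T_def)
  show ?thesis
  proof (cases "Sup T \<le> 0")
    case True
    show ?thesis
    proof (rule that[of "{}"])
      fix D' assume "D' \<in> sets M" "D' \<inter> S = {}" "prob S + prob D' < b"
      from upper[OF this] True show "prob D' \<le> 2 * prob {}" by simp
    qed (use S in auto)
  next
    case False
    then have "\<exists>y\<in>T. Sup T / 2 < y"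
      using less_cSup_iff[OF _ bdd, of "Sup T / 2"] \<open>0 \<in> T\<close> by auto
    then obtain D where D: "D \<in> sets M" "D \<inter> S = {}" "prob S + prob D < b" "Sup T / 2 < prob D"
      by (auto simp: T_def)
    show ?thesis
    proof (rule that[of D])
      fix D' assume "D' \<in> sets M" "D' \<inter> S = {}" "prob S + prob D' < b"
      from upper[OF this] D(4) show "prob D' \<le> 2 * prob D" by simp
    qed (use D in auto)
  qed
qed

lemma greedy_chain_below:
  assumes b: "0 < b"
  obtains B where "incseq B" "\<And>n. B n \<in> sets M" "\<And>n. prob (B n) < b"
    "\<And>n D. D \<in> sets M \<Longrightarrow> D \<inter> B n = {} \<Longrightarrow> prob (B n) + prob D < b
      \<Longrightarrow> prob D \<le> 2 * (prob (B (Suc n)) - prob (B n))"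
proof -
  define good where "good S D \<longleftrightarrow> D \<in> sets M \<and> D \<inter> S = {} \<and> prob S + prob D < b \<and>
      (\<forall>D'. D' \<in> sets M \<longrightarrow> D' \<inter> S = {} \<longrightarrow> prob S + prob D' < b \<longrightarrow> prob D' \<le> 2 * prob D)"
    for S D
  define step where "step S = (SOME D. good S D)" for S
  define B where "B n = ((\<lambda>S. S \<union> step S) ^^ n) {}" for n
  have step: "good S (step S)" if S: "S \<in> sets M" "prob S < b" for S
  proof -
    obtain D where "good S D"
      using exists_near_maximal_disjoint_event[OF S] unfolding good_def by metis
    then show ?thesis unfolding step_def by (rule someI)
  qed
  have prob_union: "S \<union> step S \<in> sets M \<and> prob (S \<union> step S) = prob S + prob (step S)"
    if "S \<in> sets M" "prob S < b" for S
    using step[OF that] that by (auto simp: good_def intro: finite_measure_Union)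
  have B_Suc: "B (Suc n) = B n \<union> step (B n)" for n
    by (simp add: B_def)
  have B: "B n \<in> sets M \<and> prob (B n) < b" for n
  proof (induction n)
    case (Suc n)
    then show ?case
      using step[of "B n"] prob_union[of "B n"] by (simp add: B_Suc good_def)
  qed (use b in \<open>simp add: B_def\<close>)
  show ?thesis
  proof (rule that)
    show "incseq B" by (rule incseq_SucI) (simp add: B_Suc)
    show "B n \<in> sets M" "prob (B n) < b" for n using B by auto
    show "prob D \<le> 2 * (prob (B (Suc n)) - prob (B n))"
      if "D \<in> sets M" "D \<inter> B n = {}" "prob (B n) + prob D < b" for n D
      using that step[of "B n"] B[of n] prob_union[of "B n"]
      by (simp add: good_def B_Suc Int_commute)
  qed
qed

lemma atomless_event_between:
  assumes am: "atomless M" and ab: "0 \<le> a" "a < b" "b \<le> 1"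
  obtains B where "B \<in> sets M" "a \<le> prob B" "prob B < b"
proof (rule ccontr)
  assume "\<not> thesis"
  with that have gap: "prob B < a" if "B \<in> sets M" "prob B < b" for B
    using that by (meson not_le)
  obtain B where B: "incseq B" "\<And>n. B n \<in> sets M" "\<And>n. prob (B n) < b"
    and greedy: "\<And>n D. D \<in> sets M \<Longrightarrow> D \<inter> B n = {} \<Longrightarrow> prob (B n) + prob D < b
      \<Longrightarrow> prob D \<le> 2 * (prob (B (Suc n)) - prob (B n))"
    using greedy_chain_below[of b] ab by auto
  define U where "U = (\<Union>n. B n)"
  have U: "U \<in> sets M" using B by (auto simp: U_def)
  have lim: "(\<lambda>n. prob (B n)) \<longlonglongrightarrow> prob U"
    unfolding U_def using B by (intro finite_Lim_measure_incseq) auto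
  have "prob U \<le> a"
  proof (rule tendsto_upperbound[OF lim])
    have "prob (B n) \<le> a" for n using gap[of "B n"] B by simp
    then show "\<forall>\<^sub>F n in sequentially. prob (B n) \<le> a" by simp
  qed simp
  then have "0 < prob (space M - U)" using ab U by (simp add: prob_compl)
  moreover have "space M - U \<in> sets M" using U by auto
  ultimately obtain D where D: "D \<in> sets M" "D \<subseteq> space M - U" "0 < prob D" "prob D < b - a"
    using ab by (metis atomless_small_event[OF am] diff_gt_0_iff_gt)
  \<comment> \<open>D always fits into the remaining gap, so every greedy step gains at least prob D / 2\<close>
  have grow: "real n * prob D / 2 \<le> prob (B n)" for n
  proof (induction n)
    case (Suc n)
    have "D \<inter> B n = {}" using D(2) by (auto simp: U_def)
    moreover have "prob (B n) + prob D < b" using gap[of "B n"] B D(4) by simp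
    ultimately have "prob D \<le> 2 * (prob (B (Suc n)) - prob (B n))"
      using greedy D(1) by blast
    with Suc show ?case by (simp add: field_simps)
  qed simp
  obtain n where "2 / prob D < real n" using reals_Archimedean2 by blast
  then have "1 < real n * prob D / 2" using D(3) by (simp add: field_simps)
  then show False using grow[of n] prob_le_1[of "B n"] by simp
qed

lemma atomless_two_events_between:
  assumes am: "atomless M" and ab: "0 \<le> a" "a < b" "b \<le> 1"
  obtains B C where "B \<in> sets M" "C \<in> sets M"
    "a \<le> prob B" "0 < prob B" "prob B < prob C" "prob C < b"
proof -
  have "0 \<le> max a (b / 2)" "max a (b / 2) < b" "b \<le> 1" using ab by auto
  then obtain B where B: "B \<in> sets M" "max a (b / 2) \<le> prob B" "prob B < b"
    by (rule atomless_event_between[OF am])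
  have "0 \<le> (prob B + b) / 2" "(prob B + b) / 2 < b" "b \<le> 1" using B ab by auto
  then obtain C where C: "C \<in> sets M" "(prob B + b) / 2 \<le> prob C" "prob C < b"
    by (rule atomless_event_between[OF am])
  show ?thesis by (rule that[OF B(1) C(1)]) (use B C ab in auto)
qed

end

section \<open>Constant and two-point random variables\<close>

definition upper_tail_weight :: "real \<Rightarrow> real \<Rightarrow> real" where
  "upper_tail_weight \<alpha> p = (if \<alpha> < 1 then min 1 (p / (1 - \<alpha>)) else 1)"

lemma upper_tail_weight_mono:
  "0 \<le> p \<Longrightarrow> \<alpha> \<le> \<alpha>' \<Longrightarrow> \<alpha>' \<le> 1 \<Longrightarrow> upper_tail_weight \<alpha> p \<le> upper_tail_weight \<alpha>' p"
  unfolding upper_tail_weight_def by (auto intro!: divide_left_mono simp: min_def)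

lemma upper_tail_weight_le_1: "upper_tail_weight \<alpha> p \<le> 1"
  by (simp add: upper_tail_weight_def)

lemma upper_tail_weight_eq_1: "1 - \<alpha> \<le> p \<Longrightarrow> upper_tail_weight \<alpha> p = 1"
  by (simp add: upper_tail_weight_def le_divide_eq)

lemma upper_tail_weight_eq: "\<alpha> < 1 \<Longrightarrow> p \<le> 1 - \<alpha> \<Longrightarrow> upper_tail_weight \<alpha> p = p / (1 - \<alpha>)"
  by (simp add: upper_tail_weight_def divide_le_eq)

lemma upper_tail_weight_strict_mono:
  assumes "0 < p" "p < 1 - \<alpha>" "\<alpha> < \<alpha>'" "\<alpha>' \<le> 1"
  shows "upper_tail_weight \<alpha> p < upper_tail_weight \<alpha>' p"
proof (cases "p < 1 - \<alpha>'")
  case True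
  then have "\<alpha>' < 1" using assms(1) by linarith
  then show ?thesis
    using assms True by (simp add: upper_tail_weight_eq divide_strict_left_mono)
next
  case False
  then show ?thesis
    using assms by (simp add: upper_tail_weight_eq upper_tail_weight_eq_1 divide_less_eq)
qed

context prob_space
begin

lemma rv_cdf_const: "rv_cdf M (\<lambda>_. m) x = (if x < m then 0 else 1)"
  by (simp add: rv_cdf_def prob_space)

lemma VaR_const:
  assumes "0 < \<beta>" "\<beta> \<le> 1"
  shows "VaR M \<beta> (\<lambda>_. m) = m"
proof -
  have "{x. \<beta> \<le> rv_cdf M (\<lambda>_. m) x} = {m..}"
    using assms by (auto simp: rv_cdf_const)
  then show ?thesis by (simp add: VaR_eq_Inf_rv_cdf)
qed

lemma ES_const:
  assumes "0 \<le> \<alpha>" "\<alpha> \<le> 1"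
  shows "ES M \<alpha> (\<lambda>_. m) = m"
proof (cases "\<alpha> < 1")
  case True
  have "integral {\<alpha>..1} (\<lambda>\<beta>. VaR M \<beta> (\<lambda>_. m)) = integral {\<alpha>..1} (\<lambda>_. m)"
  proof (rule integral_spike[OF negligible_sing[of 0]])
    fix \<beta> assume "\<beta> \<in> {\<alpha>..1} - {0}"
    then show "m = VaR M \<beta> (\<lambda>_. m)" using assms by (simp add: VaR_const)
  qed
  then show ?thesis using True by (simp add: ES_def content_real)
next
  case False
  then show ?thesis by (simp add: ES_def VaR_const)
qed

lemma ES_Lambda_const_rv:
  assumes L: "\<And>x. 0 \<le> \<Lambda> x \<and> \<Lambda> x \<le> 1"
  shows "ES_Lambda M \<Lambda> (\<lambda>_. m) = m"
proof -
  have "ES_Lambda M \<Lambda> (\<lambda>_. m) = (SUP x. min m x)"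
    using L by (simp add: ES_Lambda_def ES_const)
  also have "\<dots> = m"
    by (rule cSup_eq_maximum) (auto intro: rangeI[of "min m" m, simplified])
  finally show ?thesis .
qed

lemma rv_cdf_two_point:
  assumes A: "A \<in> sets M" and w: "0 < w"
  shows "rv_cdf M (\<lambda>\<omega>. v + w * indicator A \<omega>) x
       = (if x < v then 0 else if x < v + w then 1 - prob A else 1)"
proof -
  have "{\<omega>\<in>space M. v + w * indicator A \<omega> \<le> x}
      = (if x < v then {} else if x < v + w then space M - A else space M)"
    using w sets.sets_into_space[OF A] by (auto simp: indicator_def)
  then show ?thesis using A by (simp add: rv_cdf_def prob_compl prob_space)
qed

lemma VaR_two_point:
  assumes A: "A \<in> sets M" and w: "0 < w" and p: "0 < prob A" and \<beta>: "0 < \<beta>" "\<beta> \<le> 1"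
  shows "VaR M \<beta> (\<lambda>\<omega>. v + w * indicator A \<omega>) = (if \<beta> \<le> 1 - prob A then v else v + w)"
proof -
  let ?V = "\<lambda>\<omega>. v + w * indicator A \<omega>" and ?r = "if \<beta> \<le> 1 - prob A then v else v + w"
  have le_iff: "VaR M \<beta> ?V \<le> y \<longleftrightarrow> ?r \<le> y" for y
    using w p \<beta> by (simp add: VaR_le_iff[OF Linf_two_point[OF A] \<beta>] rv_cdf_two_point[OF A w])
  show ?thesis
    using le_iff[of ?r] le_iff[of "VaR M \<beta> ?V"] by (intro order_antisym) simp_all
qed

lemma ES_two_point:
  assumes A: "A \<in> sets M" and w: "0 < w" and p: "0 < prob A" and \<alpha>: "0 \<le> \<alpha>" "\<alpha> \<le> 1"
  shows "ES M \<alpha> (\<lambda>\<omega>. v + w * indicator A \<omega>) = v + w * upper_tail_weight \<alpha> (prob A)"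
proof (cases "\<alpha> < 1")
  case True
  let ?p = "prob A"
  define m where "m = max \<alpha> (1 - ?p)"
  have m: "\<alpha> \<le> m" "m \<le> 1" using p \<alpha> by (auto simp: m_def)
  have "((\<lambda>\<beta>. if \<beta> \<in> {1 - ?p..} then w else 0) has_integral (1 - m) * w) {\<alpha>..1}"
  proof -
    have "{1 - ?p..} \<inter> {\<alpha>..1} = {m..1}" by (auto simp: m_def)
    then show ?thesis
      by (subst has_integral_restrict_Int)
         (use has_integral_const_real[of w m 1] m in \<open>simp add: content_real\<close>)
  qed
  then have "((\<lambda>\<beta>. v + (if \<beta> \<in> {1 - ?p..} then w else 0))
      has_integral (1 - \<alpha>) * v + (1 - m) * w) {\<alpha>..1}"
    using has_integral_add[OF has_integral_const_real[of v \<alpha> 1]] True by (simp add: content_real)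
  moreover have "integral {\<alpha>..1} (\<lambda>\<beta>. VaR M \<beta> (\<lambda>\<omega>. v + w * indicator A \<omega>))
      = integral {\<alpha>..1} (\<lambda>\<beta>. v + (if \<beta> \<in> {1 - ?p..} then w else 0))"
  proof (rule integral_spike[of "{0, 1 - ?p}"])
    fix \<beta> assume "\<beta> \<in> {\<alpha>..1} - {0, 1 - ?p}"
    then show "v + (if \<beta> \<in> {1 - ?p..} then w else 0) = VaR M \<beta> (\<lambda>\<omega>. v + w * indicator A \<omega>)"
      using \<alpha> by (auto simp: VaR_two_point[OF A w p])
  qed auto
  moreover have "1 - m = (1 - \<alpha>) * upper_tail_weight \<alpha> ?p"
  proof (cases "\<alpha> \<le> 1 - ?p")
    case True
    then show ?thesis using \<open>\<alpha> < 1\<close> by (simp add: m_def upper_tail_weight_eq)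
  next
    case False
    then show ?thesis by (simp add: m_def upper_tail_weight_eq_1)
  qed
  ultimately show ?thesis
    using True by (simp add: ES_def integral_unique field_simps)
next
  case False
  then have "\<alpha> = 1" using \<alpha> by simp
  then show ?thesis
    using VaR_two_point[OF A w p, of 1] p by (simp add: ES_def upper_tail_weight_def)
qed

lemma ES_Lambda_two_point_le:
  assumes A: "A \<in> sets M" and w: "0 < w" and p: "0 < prob A"
    and L: "\<And>x. 0 \<le> \<Lambda> x \<and> \<Lambda> x \<le> 1" and anti: "\<And>x y. x \<le> y \<Longrightarrow> \<Lambda> y \<le> \<Lambda> x"
    and x0: "v + w * upper_tail_weight (\<Lambda> x0) (prob A) \<le> x0"
  shows "ES_Lambda M \<Lambda> (\<lambda>\<omega>. v + w * indicator A \<omega>) \<le> x0"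
proof -
  let ?V = "\<lambda>\<omega>. v + w * indicator A \<omega>"
  have "ES M \<alpha> ?V \<le> ES M \<alpha>' ?V" if "0 \<le> \<alpha>" "\<alpha> \<le> \<alpha>'" "\<alpha>' \<le> 1" for \<alpha> \<alpha>'
    using that w p upper_tail_weight_mono[of "prob A" \<alpha> \<alpha>'] by (simp add: ES_two_point[OF A w p])
  then have "ES_Lambda M \<Lambda> ?V \<le> max x0 (ES M (\<Lambda> x0) ?V)"
    by (rule ES_Lambda_le_max[OF _ L anti])
  also have "\<dots> = max x0 (v + w * upper_tail_weight (\<Lambda> x0) (prob A))"
    using L[of x0] by (simp add: ES_two_point[OF A w p])
  finally show ?thesis using x0 by simp
qed

lemma ES_Lambda_two_point_ge:
  assumes A: "A \<in> sets M" and w: "0 < w" and p: "0 < prob A"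
    and L: "\<And>x. 0 \<le> \<Lambda> x \<and> \<Lambda> x \<le> 1"
  shows "min x0 (v + w * upper_tail_weight (\<Lambda> x0) (prob A))
       \<le> ES_Lambda M \<Lambda> (\<lambda>\<omega>. v + w * indicator A \<omega>)"
proof -
  let ?V = "\<lambda>\<omega>. v + w * indicator A \<omega>"
  have "ES M \<alpha> ?V \<le> v + w" if "0 \<le> \<alpha>" "\<alpha> \<le> 1" for \<alpha>
    using that w upper_tail_weight_le_1[of \<alpha> "prob A"] by (simp add: ES_two_point[OF A w p])
  then have "min x0 (ES M (\<Lambda> x0) ?V) \<le> ES_Lambda M \<Lambda> ?V"
    by (rule min_le_ES_Lambda[OF _ L])
  then show ?thesis using L[of x0] by (simp add: ES_two_point[OF A w p])
qed

lemma rv_cdf_two_point_mixture: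
  assumes B: "B \<in> sets M" and C: "C \<in> sets M" and w: "0 < w"
    and g: "g * (1 - prob B) = 1 - prob C"
  shows "rv_cdf M (\<lambda>\<omega>. v + w * indicator C \<omega>) x
       = g * rv_cdf M (\<lambda>\<omega>. v + w * indicator B \<omega>) x + (1 - g) * rv_cdf M (\<lambda>_. v + w) x"
  using g w by (simp add: rv_cdf_two_point[OF B w] rv_cdf_two_point[OF C w] rv_cdf_const)

end

section \<open>Non-constant level\<close>

lemma chord_above_two_point:
  fixes x1 x2 g r :: real
  assumes "x1 < x2" "0 < g" "g < 1" "r < 1"
  obtains v w where "0 < w" "v + w * r = x2" "x2 < v + w" "x2 < g * x1 + (1 - g) * (v + w)"
proof -
  define u where "u = (x2 - g * x1) / (1 - g) + 1"
  have "(1 - g) * u = x2 - g * x1 + (1 - g)"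
    using assms by (simp add: u_def field_simps)
  then have chord: "x2 < g * x1 + (1 - g) * u"
    using assms by simp
  have "x2 < u"
  proof (rule ccontr)
    assume "\<not> x2 < u"
    then have "g * x1 + (1 - g) * u \<le> g * x2 + (1 - g) * x2"
      using assms by (intro add_mono mult_left_mono) auto
    then show False using chord by (simp add: algebra_simps)
  qed
  define w where "w = (u - x2) / (1 - r)"
  show ?thesis
  proof (rule that[where v = "u - w" and w = w])
    show "0 < w" using assms \<open>x2 < u\<close> by (simp add: w_def)
    have "w * (1 - r) = u - x2" using assms by (simp add: w_def)
    then show "u - w + w * r = x2" by (simp add: algebra_simps)
    show "x2 < u - w + w" using \<open>x2 < u\<close> by simp
    show "x2 < g * x1 + (1 - g) * (u - w + w)" using chord by simp
  qed
qed

context prob_space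
begin

lemma ES_Lambda_not_convex:
  assumes am: "atomless M" and L: "\<And>x. 0 \<le> \<Lambda> x \<and> \<Lambda> x \<le> 1"
    and anti: "\<And>x y. x \<le> y \<Longrightarrow> \<Lambda> y \<le> \<Lambda> x"
    and x12: "x1 < x2" "\<Lambda> x2 < \<Lambda> x1"
  shows "\<not> ES_Lambda_convex M \<Lambda>"
proof
  assume convex: "ES_Lambda_convex M \<Lambda>"
  have l: "0 \<le> \<Lambda> x2" "\<Lambda> x1 \<le> 1" using L by auto
  obtain A where A: "A \<in> sets M" "0 < prob A" "prob A < 1 - \<Lambda> x2"
    using atomless_small_event[OF am, of "space M" "1 - \<Lambda> x2"] x12 l by (auto simp: prob_space)
  define h1 where "h1 = upper_tail_weight (\<Lambda> x1) (prob A)"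
  define h2 where "h2 = upper_tail_weight (\<Lambda> x2) (prob A)"
  have "h2 < h1"
    unfolding h1_def h2_def using A x12 l by (intro upper_tail_weight_strict_mono) auto
  \<comment> \<open>the constant m keeps the average (m + x2) / 2 = x1 - 1/2 below the cap x1\<close>
  define m where "m = 2 * x1 - x2 - 1"
  define Y where "Y = (\<lambda>\<omega>. (x2 - h2) + 1 * indicator A \<omega>)"
  define Z where "Z = (\<lambda>\<omega>. (m + x2 - h2) / 2 + 1 / 2 * indicator A \<omega>)"
  have YL: "Y \<in> Linf M" unfolding Y_def by (rule Linf_two_point[OF A(1)])
  have Z_mid: "Z = (\<lambda>\<omega>. 1 / 2 * m + (1 - 1 / 2) * Y \<omega>)"
    by (auto simp: Z_def Y_def fun_eq_iff field_simps)
  have "ES_Lambda M \<Lambda> Z \<le> 1 / 2 * ES_Lambda M \<Lambda> (\<lambda>_. m) + (1 - 1 / 2) * ES_Lambda M \<Lambda> Y"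
    unfolding Z_mid by (rule ES_Lambda_convexD[OF convex Linf_const YL]) simp_all
  also have "\<dots> \<le> (m + x2) / 2"
  proof -
    have "ES_Lambda M \<Lambda> (\<lambda>_. m) = m" by (rule ES_Lambda_const_rv[OF L])
    moreover have "ES_Lambda M \<Lambda> Y \<le> x2"
      unfolding Y_def by (rule ES_Lambda_two_point_le[OF A(1) _ A(2) L anti]) (simp_all add: h2_def)
    ultimately show ?thesis by simp
  qed
  also have "\<dots> < min x1 ((m + x2 - h2) / 2 + 1 / 2 * h1)"
    using \<open>h2 < h1\<close> by (simp add: m_def field_simps)
  also have "\<dots> \<le> ES_Lambda M \<Lambda> Z"
    unfolding Z_def h1_def by (rule ES_Lambda_two_point_ge[OF A(1) _ A(2) L]) simp
  finally show False by simp
qed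

lemma ES_Lambda_not_concave_mixtures:
  assumes am: "atomless M" and L: "\<And>x. 0 \<le> \<Lambda> x \<and> \<Lambda> x \<le> 1"
    and anti: "\<And>x y. x \<le> y \<Longrightarrow> \<Lambda> y \<le> \<Lambda> x"
    and x12: "x1 < x2" "\<Lambda> x2 < \<Lambda> x1"
  shows "\<not> ES_Lambda_concave_mixtures M \<Lambda>"
proof
  assume concave: "ES_Lambda_concave_mixtures M \<Lambda>"
  define l1 l2 where "l1 = \<Lambda> x1" and "l2 = \<Lambda> x2"
  have l: "0 \<le> l2" "l2 < l1" "l1 \<le> 1" using L x12 by (auto simp: l1_def l2_def)
  \<comment> \<open>P B \<ge> 1 - l1 puts the whole l1-tail of v + w 1_B on its upper atom, while
      P C < 1 - l2 leaves part of the l2-tail of v + w 1_C on the lower atom\<close>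
  have "0 \<le> 1 - l1" "1 - l1 < 1 - l2" "1 - l2 \<le> 1" using l by auto
  then obtain B C where B: "B \<in> sets M" and C: "C \<in> sets M"
    and pq: "1 - l1 \<le> prob B" "0 < prob B" "prob B < prob C" "prob C < 1 - l2"
    by (rule atomless_two_events_between[OF am])
  define p q where "p = prob B" and "q = prob C"
  have p: "0 < p" "1 - l1 \<le> p" and q: "p < q" "q < 1 - l2" using pq by (auto simp: p_def q_def)
  define g where "g = (1 - q) / (1 - p)"
  have g: "0 < g" "g < 1" "g * (1 - p) = 1 - q" using p q l by (auto simp: g_def field_simps)
  define r where "r = q / (1 - l2)"
  have r: "r < 1" "upper_tail_weight l2 q = r"
    using p q l by (auto simp: r_def upper_tail_weight_eq field_simps)
  obtain v w where w: "0 < w" "v + w * r = x2" "x2 < v + w" "x2 < g * x1 + (1 - g) * (v + w)"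
    using x12(1) g(1,2) r(1) by (rule chord_above_two_point)
  let ?X = "\<lambda>\<omega>. v + w * indicator B \<omega>" and ?Z = "\<lambda>\<omega>. v + w * indicator C \<omega>"
  have "x1 \<le> ES_Lambda M \<Lambda> ?X"
  proof -
    have "min x1 (v + w * upper_tail_weight l1 p) \<le> ES_Lambda M \<Lambda> ?X"
      unfolding l1_def p_def
      by (rule ES_Lambda_two_point_ge[OF B(1) w(1) _ L]) (use p in \<open>simp add: p_def\<close>)
    moreover have "upper_tail_weight l1 p = 1" using p(2) by (rule upper_tail_weight_eq_1)
    ultimately show ?thesis using w(3) x12(1) by simp
  qed
  then have "g * x1 + (1 - g) * (v + w)
      \<le> g * ES_Lambda M \<Lambda> ?X + (1 - g) * ES_Lambda M \<Lambda> (\<lambda>_. v + w)"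
    using g(1) by (simp add: ES_Lambda_const_rv[OF L])
  also have "\<dots> \<le> ES_Lambda M \<Lambda> ?Z"
    using g rv_cdf_two_point_mixture[OF B(1) C(1) w(1), of g v]
    by (intro ES_Lambda_concave_mixturesD[OF concave Linf_two_point[OF B(1)] Linf_const
          Linf_two_point[OF C(1)]]) (auto simp: rv_cdf_def p_def q_def)
  also have "\<dots> \<le> x2"
    using C(1) w(1,2) p q L anti r by (intro ES_Lambda_two_point_le) (auto simp: l2_def q_def)
  finally have "g * x1 + (1 - g) * (v + w) \<le> x2" .
  then show False using w(4) by simp
qed

end

theorem proposition3:
  fixes M :: "'a measure" and \<Lambda> :: "real \<Rightarrow> real"
  assumes "prob_space M" and "atomless M"
    and "\<And>x. 0 \<le> \<Lambda> x \<and> \<Lambda> x \<le> 1"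
    and "\<And>x y. x \<le> y \<Longrightarrow> \<Lambda> y \<le> \<Lambda> x"
  shows "(ES_Lambda_convex M \<Lambda> \<longleftrightarrow> ES_Lambda_concave_mixtures M \<Lambda>)
       \<and> (ES_Lambda_concave_mixtures M \<Lambda> \<longleftrightarrow> (\<exists>c. \<forall>x. \<Lambda> x = c))"
proof -
  interpret prob_space M by fact
  show ?thesis
  proof (cases "\<exists>c. \<forall>x. \<Lambda> x = c")
    case True
    then obtain c where c: "\<Lambda> = (\<lambda>_. c)" by blast
    then have "0 \<le> c" "c \<le> 1" using assms(3) by auto
    then show ?thesis
      using ES_Lambda_convex_const ES_Lambda_concave_mixtures_const True by (simp add: c)
  next
    case False
    obtain x1 x2 where "x1 < x2" "\<Lambda> x2 < \<Lambda> x1"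
      by (rule decreasing_nonconstant_obtains[OF assms(4) False])
    then show ?thesis
      using ES_Lambda_not_convex ES_Lambda_not_concave_mixtures assms(2-4) False by blast
  qed
qed

end
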